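(* Let $N\ge 1$, let $\Delta\subseteq\{0,1\}^N$ and let $g:\Delta\to\{0,1\}$ be a partial Boolean function. Suppose $g$ is computed by an $R$-round deterministic AMPC algorithm with I/O capacity $S$. Then there is a real polynomial $p(x_1,\dots,x_N)$ of degree at most $S^{2R}$ such that $p(x)=g(x)$ for every $x\in\Delta$ and $p(x)\in\{0,1\}$ for every $x\in\{0,1\}^N\setminus\Delta$. In particular, if $g$ is total (i.e. $\Delta=\{0,1\}^N$), then $\deg(g)\le S^{2R}$.
   Context: AMPC model with I/O capacity $S$ (a positive integer). The computation proceeds in rounds $1,\dots,R$, communicating through distributed data stores (DDS) $\mathcal{D}_0,\mathcal{D}_1,\dots,\mathcal{D}_R$. A DDS stores, under each key, a multiset of values (possibly empty); each value is written by a unique machine and duplicates are allowed. On input $x\in\{0,1\}^N$, $\mathcal{D}_0$ consists of the $N$ key-value pairs $(i,x_i)$, $i=1,\dots,N$. In round $r\ge1$, each machine (there may be arbitrarily many machines, each computationally unbounded and deterministic) adaptively makes a sequence of queries to $\mathcal{D}_{r-1}$: each query is a key, the response is the entire multiset of values stored under that key in $\mathcal{D}_{r-1}$ (empty if none), and each query may depend arbitrarily on the keys and responses of the machine's earlier queries in that round. The sum of the total number of values in all responses and the number of queries with empty response is at most $S$; then the machine writes at most $S$ key-value pairs to $\mathcal{D}_r$, as an arbitrary function of its sequence of queries and responses. The multiset stored under key $k$ in $\mathcal{D}_r$ is the multiset union of all values written under $k$ in round $r$. The algorithm is run on all inputs $x\in\{0,1\}^N$ (including invalid ones $x\notin\Delta$),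 where a machine whose budget would be exceeded stops querying and writes nothing; it is required that in every round, on every input in $\{0,1\}^N$, at most $S$ values are written under any single key. The algorithm computes $g$ in $R$ rounds if for every $x\in\Delta$, $\mathcal{D}_R$ contains exactly the single key-value pair $(\textsc{answer},g(x))$. For a total Boolean function $g:\{0,1\}^N\to\{0,1\}$, $\deg(g)$ is the degree of the unique multilinear real polynomial agreeing with $g$ on $\{0,1\}^N$. *)

theory Defs
  imports Complex_Main "HOL-Library.Multiset"
begin

datatype 'k key = Inp nat | Answer | Key 'k
datatype 'v val = Bit bool | Val 'v

type_synonym ('k,'v) dds = "'k key \<Rightarrow> 'v val multiset"
(* the sequence of (query key, response) pairs of a machine in one round *)
type_synonym ('k,'v) hist = "('k key \<times> 'v val multiset) list"

definition cost :: "('k,'v) hist \<Rightarrow> nat" where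
  "cost h = (\<Sum>p\<leftarrow>h. if snd p = {#} then 1 else size (snd p))"

(* adaptive querying with budget S; None = budget exceeded (machine writes nothing).
   Each query costs at least 1, so fuel S+1 always suffices. *)
fun exec :: "nat \<Rightarrow> nat \<Rightarrow> (('k,'v) hist \<Rightarrow> 'k key option) \<Rightarrow> ('k,'v) dds
              \<Rightarrow> ('k,'v) hist \<Rightarrow> ('k,'v) hist option" where
  "exec S 0 q D h =
     (if cost h > S then None else (case q h of None \<Rightarrow> Some h | Some _ \<Rightarrow> None))"
| "exec S (Suc n) q D h =
     (if cost h > S then None
      else (case q h of None \<Rightarrow> Some h | Some k \<Rightarrow> exec S n q D (h @ [(k, D k)])))"

definition machine_writes ::
  "nat \<Rightarrow> (('k,'v) hist \<Rightarrow> 'k key option) \<Rightarrow> (('k,'v) hist \<Rightarrow> ('k key \<times> 'v val) list)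
   \<Rightarrow> ('k,'v) dds \<Rightarrow> ('k key \<times> 'v val) list" where
  "machine_writes S q w D = (case exec S (Suc S) q D [] of None \<Rightarrow> [] | Some h \<Rightarrow> w h)"

definition writers ::
  "nat \<Rightarrow> ('m \<Rightarrow> ('k,'v) hist \<Rightarrow> 'k key option) \<Rightarrow> ('m \<Rightarrow> ('k,'v) hist \<Rightarrow> ('k key \<times> 'v val) list)
   \<Rightarrow> ('k,'v) dds \<Rightarrow> 'k key \<Rightarrow> ('m \<times> nat) set" where
  "writers S q w D k = {(m, j). j < length (machine_writes S (q m) (w m) D)
                               \<and> fst (machine_writes S (q m) (w m) D ! j) = k}"

definition step ::
  "nat \<Rightarrow> ('m \<Rightarrow> ('k,'v) hist \<Rightarrow> 'k key option) \<Rightarrow> ('m \<Rightarrow> ('k,'v) hist \<Rightarrow> ('k key \<times> 'v val) list)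
   \<Rightarrow> ('k,'v) dds \<Rightarrow> ('k,'v) dds" where
  "step S q w D = (\<lambda>k. \<Sum>p\<in>writers S q w D k.
                         {# snd (machine_writes S (q (fst p)) (w (fst p)) D ! snd p) #})"

(* inputs x in {0,1}^N are functions nat => bool supported on {1..N} *)
definition cube :: "nat \<Rightarrow> (nat \<Rightarrow> bool) set" where
  "cube N = {x. \<forall>i. x i \<longrightarrow> 1 \<le> i \<and> i \<le> N}"

definition init_dds :: "nat \<Rightarrow> (nat \<Rightarrow> bool) \<Rightarrow> ('k,'v) dds" where
  "init_dds N x = (\<lambda>k. case k of Inp i \<Rightarrow> if 1 \<le> i \<and> i \<le> N then {#Bit (x i)#} else {#}
                                | _ \<Rightarrow> {#})"

(* D_r on input x; q r m / w r m are the query strategy / write function of machine m in round r *)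
fun dds_round ::
  "nat \<Rightarrow> nat \<Rightarrow> (nat \<Rightarrow> 'm \<Rightarrow> ('k,'v) hist \<Rightarrow> 'k key option)
   \<Rightarrow> (nat \<Rightarrow> 'm \<Rightarrow> ('k,'v) hist \<Rightarrow> ('k key \<times> 'v val) list)
   \<Rightarrow> (nat \<Rightarrow> bool) \<Rightarrow> nat \<Rightarrow> ('k,'v) dds" where
  "dds_round N S q w x 0 = init_dds N x"
| "dds_round N S q w x (Suc r) = step S (q (Suc r)) (w (Suc r)) (dds_round N S q w x r)"

definition ampc_computes ::
  "nat \<Rightarrow> nat \<Rightarrow> nat \<Rightarrow> (nat \<Rightarrow> 'm \<Rightarrow> ('k,'v) hist \<Rightarrow> 'k key option)
   \<Rightarrow> (nat \<Rightarrow> 'm \<Rightarrow> ('k,'v) hist \<Rightarrow> ('k key \<times> 'v val) list)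
   \<Rightarrow> (nat \<Rightarrow> bool) set \<Rightarrow> ((nat \<Rightarrow> bool) \<Rightarrow> bool) \<Rightarrow> bool" where
  "ampc_computes N S R q w \<Delta> g \<longleftrightarrow>
     (\<forall>r\<in>{1..R}. \<forall>m h. length (w r m h) \<le> S) \<and>
     (\<forall>r\<in>{1..R}. \<forall>x\<in>cube N. \<forall>k.
        finite (writers S (q r) (w r) (dds_round N S q w x (r - 1)) k) \<and>
        card (writers S (q r) (w r) (dds_round N S q w x (r - 1)) k) \<le> S) \<and>
     (\<forall>x\<in>\<Delta>. dds_round N S q w x R = (\<lambda>k. if k = Answer then {#Bit (g x)#} else {#}))"

definition poly_deg_le :: "nat \<Rightarrow> nat \<Rightarrow> ((nat \<Rightarrow> real) \<Rightarrow> real) \<Rightarrow> bool" where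
  "poly_deg_le N d p \<longleftrightarrow>
     (\<exists>A c. finite A \<and> (\<forall>\<alpha>\<in>A. (\<Sum>i=1..N. \<alpha> i) \<le> d) \<and>
        (\<forall>y. p y = (\<Sum>\<alpha>\<in>A. c \<alpha> * (\<Prod>i=1..N. y i ^ \<alpha> i))))"

definition ml_eval :: "nat \<Rightarrow> (nat set \<Rightarrow> real) \<Rightarrow> (nat \<Rightarrow> bool) \<Rightarrow> real" where
  "ml_eval N c x = (\<Sum>T\<in>Pow {1..N}. c T * (\<Prod>i\<in>T. of_bool (x i)))"

(* deg(g): degree of the unique multilinear polynomial agreeing with g on {0,1}^N *)
definition deg_bool :: "nat \<Rightarrow> ((nat \<Rightarrow> bool) \<Rightarrow> bool) \<Rightarrow> nat" where
  "deg_bool N g = (THE d. \<exists>c. (\<forall>x\<in>cube N. of_bool (g x) = ml_eval N c x) \<and>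
       d = Max (insert 0 {card T | T. T \<subseteq> {1..N} \<and> c T \<noteq> 0}))"

end

theory Submission
  imports Defs
begin

(* For every round r, key k and multiset M, the indicator of the event "D_r stores exactly M
   under k" is, as a function of the input x in {0,1}^N, a polynomial of degree at most S^(2r).
   For D_0 these events are literals x_i or 1 - x_i.  A machine of round r+1 sees transcript h
   iff each of its at most S queries receives the response recorded in h: a product of at most
   S indicators of the previous round.  The contents of key k in D_(r+1) are determined by the
   set Z of (write slot, value) pairs written under k, and |Z| <= S.  Hence [T \<subseteq> Z] is a
   product of at most S write indicators if |T| <= S and vanishes identically otherwise, and
   inclusion-exclusion expresses [Z = T] through the [T' \<subseteq> Z].  So the indicator of
   D_R(ANSWER) = {1} is a 0/1-valued polynomial of degree at most S^(2R) agreeing with g on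
   Delta; multilinearising it on the cube bounds deg g when g is total. *)

definition monomial :: "nat \<Rightarrow> (nat \<Rightarrow> nat) \<Rightarrow> (nat \<Rightarrow> real) \<Rightarrow> real" where
  "monomial N \<alpha> y = (\<Prod>i=1..N. y i ^ \<alpha> i)"

lemma poly_deg_le_iff_monomial:
  "poly_deg_le N d p \<longleftrightarrow>
     (\<exists>A c. finite A \<and> (\<forall>\<alpha>\<in>A. (\<Sum>i=1..N. \<alpha> i) \<le> d) \<and>
        (\<forall>y. p y = (\<Sum>\<alpha>\<in>A. c \<alpha> * monomial N \<alpha> y)))"
  unfolding poly_deg_le_def monomial_def ..

lemma monomial_add: "monomial N (\<lambda>i. \<alpha> i + \<beta> i) y = monomial N \<alpha> y * monomial N \<beta> y"
  unfolding monomial_def by (simp add: power_add prod.distrib)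

lemma poly_deg_le_sum_monomials:
  assumes "finite J" "\<And>j. j \<in> J \<Longrightarrow> (\<Sum>i=1..N. e j i) \<le> d"
    and "\<And>y. p y = (\<Sum>j\<in>J. a j * monomial N (e j) y)"
  shows "poly_deg_le N d p"
proof -
  define c where "c \<alpha> = (\<Sum>j\<in>{j\<in>J. e j = \<alpha>}. a j)" for \<alpha>
  have "p y = (\<Sum>\<alpha>\<in>e ` J. c \<alpha> * monomial N \<alpha> y)" for y
  proof -
    have "p y = (\<Sum>\<alpha>\<in>e ` J. \<Sum>j\<in>{j\<in>J. e j = \<alpha>}. a j * monomial N (e j) y)"
      using assms(3) sum.image_gen[OF assms(1), of "\<lambda>j. a j * monomial N (e j) y" e] by simp
    also have "\<dots> = (\<Sum>\<alpha>\<in>e ` J. c \<alpha> * monomial N \<alpha> y)"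
      unfolding c_def sum_distrib_right by (intro sum.cong refl) auto
    finally show ?thesis .
  qed
  with assms(1,2) show ?thesis
    unfolding poly_deg_le_iff_monomial by (intro exI[of _ "e ` J"] exI[of _ c]) auto
qed

lemma poly_deg_le_const: "poly_deg_le N d (\<lambda>y. a)"
  by (rule poly_deg_le_sum_monomials[where J = "{()}" and e = "\<lambda>_ _. 0" and a = "\<lambda>_. a"])
    (auto simp: monomial_def)

lemma poly_deg_le_var:
  assumes "i \<in> {1..N}"
  shows "poly_deg_le N 1 (\<lambda>y. y i)"
proof (rule poly_deg_le_sum_monomials[where J = "{()}" and e = "\<lambda>_ j. if j = i then 1 else 0"
      and a = "\<lambda>_. 1"])
  show "(\<Sum>j=1..N. if j = i then 1 else 0) \<le> (1::nat)"
    using assms by simp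
  have "monomial N (\<lambda>j. if j = i then 1 else 0) y = (\<Prod>j=1..N. if j = i then y j else 1)" for y
    unfolding monomial_def by (intro prod.cong) auto
  then show "y i = (\<Sum>j\<in>{()}. 1 * monomial N (\<lambda>j. if j = i then 1 else 0) y)" for y
    using assms by (simp add: prod.delta)
qed auto

lemma poly_deg_le_add:
  assumes "poly_deg_le N d p" "poly_deg_le N d q"
  shows "poly_deg_le N d (\<lambda>y. p y + q y)"
proof -
  obtain A c where A: "finite A" "\<forall>\<alpha>\<in>A. (\<Sum>i=1..N. \<alpha> i) \<le> d"
    "\<forall>y. p y = (\<Sum>\<alpha>\<in>A. c \<alpha> * monomial N \<alpha> y)"
    using assms(1) unfolding poly_deg_le_iff_monomial by blast
  obtain B b where B: "finite B" "\<forall>\<beta>\<in>B. (\<Sum>i=1..N. \<beta> i) \<le> d"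
    "\<forall>y. q y = (\<Sum>\<beta>\<in>B. b \<beta> * monomial N \<beta> y)"
    using assms(2) unfolding poly_deg_le_iff_monomial by blast
  show ?thesis
    by (rule poly_deg_le_sum_monomials[where J = "A <+> B" and e = "case_sum id id"
          and a = "case_sum c b"]) (use A B in \<open>auto simp: sum.Plus\<close>)
qed

lemma poly_deg_le_mult:
  assumes "poly_deg_le N d1 p" "poly_deg_le N d2 q" "d1 + d2 \<le> d"
  shows "poly_deg_le N d (\<lambda>y. p y * q y)"
proof -
  obtain A c where A: "finite A" "\<forall>\<alpha>\<in>A. (\<Sum>i=1..N. \<alpha> i) \<le> d1"
    "\<forall>y. p y = (\<Sum>\<alpha>\<in>A. c \<alpha> * monomial N \<alpha> y)"
    using assms(1) unfolding poly_deg_le_iff_monomial by blast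
  obtain B b where B: "finite B" "\<forall>\<beta>\<in>B. (\<Sum>i=1..N. \<beta> i) \<le> d2"
    "\<forall>y. q y = (\<Sum>\<beta>\<in>B. b \<beta> * monomial N \<beta> y)"
    using assms(2) unfolding poly_deg_le_iff_monomial by blast
  show ?thesis
  proof (rule poly_deg_le_sum_monomials[where J = "A \<times> B" and e = "\<lambda>(\<alpha>, \<beta>) i. \<alpha> i + \<beta> i"
        and a = "\<lambda>(\<alpha>, \<beta>). c \<alpha> * b \<beta>"])
    show "(\<Sum>i=1..N. (case j of (\<alpha>, \<beta>) \<Rightarrow> \<lambda>i. \<alpha> i + \<beta> i) i) \<le> d" if "j \<in> A \<times> B" for j
      using that A(2) B(2) assms(3) by (force simp: sum.distrib intro: le_trans[OF add_mono])
    fix y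
    have "p y * q y = (\<Sum>(\<alpha>, \<beta>)\<in>A \<times> B. (c \<alpha> * monomial N \<alpha> y) * (b \<beta> * monomial N \<beta> y))"
      using A(3) B(3) by (simp add: sum_product sum.cartesian_product)
    then show "p y * q y = (\<Sum>j\<in>A \<times> B. (case j of (\<alpha>, \<beta>) \<Rightarrow> c \<alpha> * b \<beta>) *
        monomial N (case j of (\<alpha>, \<beta>) \<Rightarrow> \<lambda>i. \<alpha> i + \<beta> i) y)"
      by (simp add: monomial_add case_prod_beta mult_ac)
  qed (use A B in auto)
qed

definition cube_deg_le :: "nat \<Rightarrow> nat \<Rightarrow> ((nat \<Rightarrow> bool) \<Rightarrow> real) \<Rightarrow> bool" where
  "cube_deg_le N d f \<longleftrightarrow> (\<exists>p. poly_deg_le N d p \<and> (\<forall>x\<in>cube N. f x = p (\<lambda>i. of_bool (x i))))"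

lemma finite_cube: "finite (cube N)"
proof -
  have "inj_on Collect (cube N)"
    by (auto simp: inj_on_def)
  moreover have "Collect ` cube N \<subseteq> Pow {1..N}"
    unfolding cube_def by auto
  ultimately show ?thesis
    by (meson finite_Pow_iff finite_atLeastAtMost finite_subset inj_on_finite)
qed

lemma prod_of_bool:
  "finite A \<Longrightarrow> (\<Prod>a\<in>A. (of_bool (P a) :: 'a::comm_semiring_1)) = of_bool (\<forall>a\<in>A. P a)"
  by (induction A rule: finite_induct) auto

lemma cube_deg_le_cong:
  "cube_deg_le N d f \<Longrightarrow> (\<And>x. x \<in> cube N \<Longrightarrow> f x = g x) \<Longrightarrow> cube_deg_le N d g"
  unfolding cube_deg_le_def by metis

lemma cube_deg_le_const: "cube_deg_le N d (\<lambda>x. a)"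
  unfolding cube_deg_le_def using poly_deg_le_const by blast

lemma cube_deg_le_add:
  "cube_deg_le N d f \<Longrightarrow> cube_deg_le N d g \<Longrightarrow> cube_deg_le N d (\<lambda>x. f x + g x)"
  unfolding cube_deg_le_def using poly_deg_le_add by fastforce

lemma cube_deg_le_mult:
  "cube_deg_le N d1 f \<Longrightarrow> cube_deg_le N d2 g \<Longrightarrow> d1 + d2 \<le> d
   \<Longrightarrow> cube_deg_le N d (\<lambda>x. f x * g x)"
  unfolding cube_deg_le_def using poly_deg_le_mult by fastforce

lemma cube_deg_le_cmult: "cube_deg_le N d f \<Longrightarrow> cube_deg_le N d (\<lambda>x. a * f x)"
  using cube_deg_le_mult[OF cube_deg_le_const, of N d f 0 d a] by simp

lemma cube_deg_le_sum:
  "finite A \<Longrightarrow> (\<And>a. a \<in> A \<Longrightarrow> cube_deg_le N d (f a)) \<Longrightarrow> cube_deg_le N d (\<lambda>x. \<Sum>a\<in>A. f a x)"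
proof (induction A rule: finite_induct)
  case empty
  then show ?case using cube_deg_le_const[of N d 0] by simp
next
  case (insert a A)
  then show ?case using cube_deg_le_add[of N d "f a"] by simp
qed

lemma cube_deg_le_prod:
  "finite A \<Longrightarrow> (\<And>a. a \<in> A \<Longrightarrow> cube_deg_le N d (f a)) \<Longrightarrow> card A * d \<le> d'
   \<Longrightarrow> cube_deg_le N d' (\<lambda>x. \<Prod>a\<in>A. f a x)"
proof (induction A arbitrary: d' rule: finite_induct)
  case empty
  then show ?case using cube_deg_le_const[of N d' 1] by simp
next
  case (insert a A)
  then have "cube_deg_le N (card A * d) (\<lambda>x. \<Prod>a\<in>A. f a x)" by simp
  with insert show ?case using cube_deg_le_mult[of N d "f a" "card A * d" _ d'] by simp
qed

lemma cube_deg_le_literal: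
  assumes "i \<in> {1..N}"
  shows "cube_deg_le N 1 (\<lambda>x. of_bool (x i = b))"
proof -
  have var: "cube_deg_le N 1 (\<lambda>x. of_bool (x i))"
    unfolding cube_deg_le_def using poly_deg_le_var[OF assms] by fastforce
  show ?thesis
  proof (cases b)
    case True
    with var show ?thesis by simp
  next
    case False
    have "cube_deg_le N 1 (\<lambda>x. 1 + (-1) * of_bool (x i))"
      by (intro cube_deg_le_add cube_deg_le_const cube_deg_le_cmult var)
    then show ?thesis by (rule cube_deg_le_cong) (use False in auto)
  qed
qed

text \<open>Since the cube is finite, \<open>\<phi>\<close> takes only finitely many values on it, and the indicator of
  \<open>P (\<phi> x)\<close> is the sum of the indicators of \<open>\<phi> x = a\<close> over those values with \<open>P a\<close>.\<close>
lemma cube_deg_le_of_bool_comp: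
  assumes "\<And>a. P a \<Longrightarrow> cube_deg_le N d (\<lambda>x. of_bool (\<phi> x = a))"
  shows "cube_deg_le N d (\<lambda>x. of_bool (P (\<phi> x)))"
proof -
  let ?A = "{a\<in>\<phi> ` cube N. P a}"
  have fin: "finite ?A" using finite_cube by simp
  have "cube_deg_le N d (\<lambda>x. \<Sum>a\<in>?A. of_bool (\<phi> x = a))"
    by (rule cube_deg_le_sum[OF fin]) (use assms in auto)
  moreover have "(\<Sum>a\<in>?A. of_bool (\<phi> x = a)) = (of_bool (P (\<phi> x)) :: real)" if "x \<in> cube N" for x
    using fin that by (simp add: of_bool_def eq_commute[of "\<phi> x"] sum.If_cases Int_def)
  ultimately show ?thesis by (rule cube_deg_le_cong)
qed

fun consistent_run :: "(('k,'v) hist \<Rightarrow> 'k key option) \<Rightarrow> ('k,'v) hist \<Rightarrow> ('k,'v) hist \<Rightarrow> bool" where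
  "consistent_run q h0 [] \<longleftrightarrow> q h0 = None"
| "consistent_run q h0 (a # h) \<longleftrightarrow> q h0 = Some (fst a) \<and> consistent_run q (h0 @ [a]) h"

lemma cost_append: "cost (h @ h') = cost h + cost h'"
  unfolding cost_def by simp

lemma length_le_cost: "length h \<le> cost h"
proof (induction h)
  case Nil
  then show ?case by (simp add: cost_def)
next
  case (Cons a h)
  have "1 \<le> (if snd a = {#} then 1 else size (snd a))"
    by (auto simp: Suc_le_eq nonempty_has_size)
  with Cons show ?case by (simp add: cost_def)
qed

lemma exec_eq_Some_iff:
  "exec S n q D h0 = Some h \<longleftrightarrow>
     (\<exists>h1. h = h0 @ h1 \<and> length h1 \<le> n \<and> cost h \<le> S \<and> consistent_run q h0 h1 \<and>
           (\<forall>a\<in>set h1. D (fst a) = snd a))"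
proof (induction n arbitrary: h0)
  case 0
  show ?case by (auto split: option.splits)
next
  case (Suc n)
  have ex_list: "(\<exists>h1. P h1) \<longleftrightarrow> P [] \<or> (\<exists>a h2. P (a # h2))" for P :: "('k,'v) hist \<Rightarrow> bool"
    by (metis list.exhaust)
  show ?case
    by (subst ex_list) (auto simp: Suc.IH cost_append split: option.splits)
qed

corollary exec_machine_eq_Some_iff:
  "exec S (Suc S) q D [] = Some h \<longleftrightarrow>
     cost h \<le> S \<and> consistent_run q [] h \<and> (\<forall>a\<in>set h. D (fst a) = snd a)"
  using exec_eq_Some_iff[of S "Suc S" q D "[]" h] length_le_cost[of h] by auto

definition dds_deg_le :: "nat \<Rightarrow> nat \<Rightarrow> ((nat \<Rightarrow> bool) \<Rightarrow> ('k,'v) dds) \<Rightarrow> bool" where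
  "dds_deg_le N d D \<longleftrightarrow> (\<forall>k M. cube_deg_le N d (\<lambda>x. of_bool (D x k = M)))"

lemma cube_deg_le_exec:
  assumes "dds_deg_le N d D"
  shows "cube_deg_le N (S * d) (\<lambda>x. of_bool (exec S (Suc S) q (D x) [] = Some h))"
proof (cases "cost h \<le> S \<and> consistent_run q [] h")
  case True
  have "card (set h) * d \<le> S * d"
    using card_length[of h] length_le_cost[of h] True by (intro mult_right_mono) auto
  then have "cube_deg_le N (S * d) (\<lambda>x. \<Prod>a\<in>set h. of_bool (D x (fst a) = snd a))"
    using assms unfolding dds_deg_le_def by (intro cube_deg_le_prod[where d = d]) auto
  then show ?thesis
    by (rule cube_deg_le_cong)
      (use True in \<open>simp del: exec.simps add: exec_machine_eq_Some_iff prod_of_bool\<close>)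
next
  case False
  show ?thesis
    by (rule cube_deg_le_cong[OF cube_deg_le_const[of N "S * d" 0]])
      (use False in \<open>auto simp del: exec.simps simp: exec_machine_eq_Some_iff\<close>)
qed

lemma cube_deg_le_machine_writes:
  assumes "dds_deg_le N d D"
  shows "cube_deg_le N (S * d) (\<lambda>x. of_bool (j < length (machine_writes S q w (D x)) \<and>
                                              machine_writes S q w (D x) ! j = kv))"
proof -
  let ?writes_kv = "\<lambda>r. case r of None \<Rightarrow> False | Some h \<Rightarrow> j < length (w h) \<and> w h ! j = kv"
  have "cube_deg_le N (S * d) (\<lambda>x. of_bool (?writes_kv (exec S (Suc S) q (D x) [])))"
    by (rule cube_deg_le_of_bool_comp[where P = ?writes_kv])
      (auto simp del: exec.simps split: option.splits intro: cube_deg_le_exec[OF assms])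
  then show ?thesis
    unfolding machine_writes_def
    by (rule cube_deg_le_cong) (auto simp del: exec.simps split: option.splits)
qed

lemma of_bool_eq_alternating_sum:
  assumes "finite U" "X \<subseteq> U" "T \<subseteq> U"
  shows "(of_bool (X = T) :: 'a::comm_ring_1) =
           (\<Sum>B\<in>Pow (U - T). (-1) ^ card B * of_bool (T \<union> B \<subseteq> X))"
proof -
  have fin: "finite T" "finite (U - T)"
    using assms finite_subset by auto
  have "X = T \<longleftrightarrow> T \<subseteq> X \<and> (\<forall>u\<in>U - T. u \<notin> X)"
    using assms(2) by blast
  then have "(of_bool (X = T) :: 'a) = of_bool (T \<subseteq> X) * (\<Prod>u\<in>U - T. 1 - of_bool (u \<in> X))"
    using fin(2) by (simp add: of_bool_conj prod_of_bool[symmetric] of_bool_not_iff)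
  also have "\<dots> = of_bool (T \<subseteq> X) *
      (\<Sum>B\<in>Pow (U - T). (-1) ^ card B * (\<Prod>u\<in>B. of_bool (u \<in> X)) * (\<Prod>u\<in>U - T - B. 1))"
    using fin(2) by (simp only: prod_diff_conv_sum)
  also have "\<dots> = (\<Sum>B\<in>Pow (U - T). (-1) ^ card B * of_bool (T \<union> B \<subseteq> X))"
    unfolding sum_distrib_left
  proof (intro sum.cong refl)
    fix B assume "B \<in> Pow (U - T)"
    then have "finite B"
      using fin(2) finite_subset by auto
    then show "of_bool (T \<subseteq> X) *
        ((-1) ^ card B * (\<Prod>u\<in>B. of_bool (u \<in> X)) * (\<Prod>u\<in>U - T - B. 1)) =
        (-1) ^ card B * (of_bool (T \<union> B \<subseteq> X) :: 'a)"
      by (simp add: prod_of_bool subset_iff) blast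
  qed
  finally show ?thesis .
qed

lemma cube_deg_le_set_eq:
  assumes fin: "\<And>x. x \<in> cube N \<Longrightarrow> finite (Z x)"
    and subset: "\<And>T. cube_deg_le N d (\<lambda>x. of_bool (T \<subseteq> Z x))"
  shows "cube_deg_le N d (\<lambda>x. of_bool (Z x = T))"
proof -
  define U where "U = \<Union> (Z ` cube N)"
  have "finite U"
    unfolding U_def using finite_cube fin by blast
  have Z_U: "x \<in> cube N \<Longrightarrow> Z x \<subseteq> U" for x
    unfolding U_def by blast
  show ?thesis
  proof (cases "T \<subseteq> U")
    case True
    have "cube_deg_le N d (\<lambda>x. \<Sum>B\<in>Pow (U - T). (-1) ^ card B * of_bool (T \<union> B \<subseteq> Z x))"
      using \<open>finite U\<close> by (intro cube_deg_le_sum cube_deg_le_cmult subset) auto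
    then show ?thesis
      by (rule cube_deg_le_cong) (simp only: of_bool_eq_alternating_sum[OF \<open>finite U\<close> Z_U True])
  next
    case False
    then have Z_ne: "Z x \<noteq> T" if "x \<in> cube N" for x
      using Z_U[OF that] by blast
    show ?thesis
      by (rule cube_deg_le_cong[OF cube_deg_le_const[of N d 0]]) (simp add: Z_ne)
  qed
qed

definition written_under ::
  "nat \<Rightarrow> ('m \<Rightarrow> ('k,'v) hist \<Rightarrow> 'k key option)
   \<Rightarrow> ('m \<Rightarrow> ('k,'v) hist \<Rightarrow> ('k key \<times> 'v val) list)
   \<Rightarrow> ('k,'v) dds \<Rightarrow> 'k key \<Rightarrow> (('m \<times> nat) \<times> 'v val) set" where
  "written_under S q w D k = {((m, j), v). j < length (machine_writes S (q m) (w m) D) \<and>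
                                          machine_writes S (q m) (w m) D ! j = (k, v)}"

lemma written_under_eq_image:
  "written_under S q w D k =
     (\<lambda>p. (p, snd (machine_writes S (q (fst p)) (w (fst p)) D ! snd p))) ` writers S q w D k"
  unfolding written_under_def writers_def by (auto simp: prod_eq_iff image_iff)

lemma step_eq_sum_written_under: "step S q w D k = (\<Sum>z\<in>written_under S q w D k. {#snd z#})"
proof -
  have "inj_on (\<lambda>p. (p, snd (machine_writes S (q (fst p)) (w (fst p)) D ! snd p)))
      (writers S q w D k)"
    by (auto simp: inj_on_def)
  then show ?thesis
    unfolding written_under_eq_image step_def by (simp add: sum.reindex)
qed

text \<open>At most \<open>S\<close> values are written under \<open>k\<close>, so the indicator of \<open>T \<subseteq> written_under \<dots>\<close>
  vanishes identically when \<open>T\<close> has more than \<open>S\<close> elements; otherwise it is a product of at most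
  \<open>S\<close> write indicators.\<close>
lemma cube_deg_le_subset_written_under:
  assumes "dds_deg_le N d D"
    and writers: "\<And>x. x \<in> cube N \<Longrightarrow>
      finite (writers S q w (D x) k) \<and> card (writers S q w (D x) k) \<le> S"
  shows "cube_deg_le N (S * S * d) (\<lambda>x. of_bool (T \<subseteq> written_under S q w (D x) k))"
proof (cases "finite T \<and> card T \<le> S")
  case True
  have mem: "cube_deg_le N (S * d) (\<lambda>x. of_bool (z \<in> written_under S q w (D x) k))" for z
    using cube_deg_le_machine_writes[OF assms(1)] by (cases z) (auto simp: written_under_def)
  have "card T * (S * d) \<le> S * S * d"
    using True by (simp add: mult_right_mono mult.assoc)
  then have "cube_deg_le N (S * S * d) (\<lambda>x. \<Prod>z\<in>T. of_bool (z \<in> written_under S q w (D x) k))"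
    using True mem by (intro cube_deg_le_prod[where d = "S * d"]) auto
  then show ?thesis
    by (rule cube_deg_le_cong) (use True in \<open>simp add: prod_of_bool subset_eq\<close>)
next
  case False
  have not_subset: "\<not> T \<subseteq> written_under S q w (D x) k" if "x \<in> cube N" for x
  proof
    assume subset: "T \<subseteq> written_under S q w (D x) k"
    have "finite (written_under S q w (D x) k)" "card (written_under S q w (D x) k) \<le> S"
      using writers[OF that] unfolding written_under_eq_image
      by (auto intro: le_trans[OF card_image_le])
    with subset False show False
      using card_mono[of "written_under S q w (D x) k" T] finite_subset[of T] by auto
  qed
  show ?thesis
    by (rule cube_deg_le_cong[OF cube_deg_le_const[of N "S * S * d" 0]]) (simp add: not_subset)
qed

lemma dds_deg_le_step:
  assumes "dds_deg_le N d D"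
    and "\<And>x k. x \<in> cube N \<Longrightarrow>
      finite (writers S q w (D x) k) \<and> card (writers S q w (D x) k) \<le> S"
  shows "dds_deg_le N (S * S * d) (\<lambda>x. step S q w (D x))"
  unfolding dds_deg_le_def
proof (intro allI)
  fix k M
  have "cube_deg_le N (S * S * d) (\<lambda>x. of_bool (written_under S q w (D x) k = T))" for T
  proof (rule cube_deg_le_set_eq)
    show "finite (written_under S q w (D x) k)" if "x \<in> cube N" for x
      using assms(2)[OF that] unfolding written_under_eq_image by blast
  qed (rule cube_deg_le_subset_written_under[OF assms])
  then have "cube_deg_le N (S * S * d)
      (\<lambda>x. of_bool ((\<lambda>Z. (\<Sum>z\<in>Z. {#snd z#}) = M) (written_under S q w (D x) k)))"
    by (rule cube_deg_le_of_bool_comp)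
  then show "cube_deg_le N (S * S * d) (\<lambda>x. of_bool (step S q w (D x) k = M))"
    by (simp add: step_eq_sum_written_under)
qed

lemma dds_deg_le_init: "dds_deg_le N 1 (init_dds N)"
  unfolding dds_deg_le_def
proof (intro allI)
  fix k M
  show "cube_deg_le N 1 (\<lambda>x. of_bool (init_dds N x k = M))"
  proof (cases "\<exists>i\<in>{1..N}. k = Inp i")
    case True
    then obtain i where i: "i \<in> {1..N}" "k = Inp i" by blast
    have "cube_deg_le N 1 (\<lambda>x. of_bool ((\<lambda>b. {#Bit b#} = M) (x i)))"
      by (rule cube_deg_le_of_bool_comp) (rule cube_deg_le_literal[OF i(1)])
    then show ?thesis
      by (rule cube_deg_le_cong) (use i in \<open>simp add: init_dds_def\<close>)
  next
    case False
    then have empty: "init_dds N x k = {#}" for x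
      by (cases k) (auto simp: init_dds_def)
    show ?thesis
      by (simp add: empty cube_deg_le_const)
  qed
qed

lemma dds_deg_le_dds_round:
  assumes "\<forall>r\<in>{1..R}. \<forall>x\<in>cube N. \<forall>k.
      finite (writers S (q r) (w r) (dds_round N S q w x (r - 1)) k) \<and>
      card (writers S (q r) (w r) (dds_round N S q w x (r - 1)) k) \<le> S"
  shows "r \<le> R \<Longrightarrow> dds_deg_le N (S ^ (2 * r)) (\<lambda>x. dds_round N S q w x r)"
proof (induction r)
  case 0
  then show ?case using dds_deg_le_init by simp
next
  case (Suc r)
  have "dds_deg_le N (S * S * S ^ (2 * r))
      (\<lambda>x. step S (q (Suc r)) (w (Suc r)) (dds_round N S q w x r))"
    using Suc assms[rule_format, of "Suc r"] by (intro dds_deg_le_step) auto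
  moreover have "S * S * S ^ (2 * r) = S ^ (2 * Suc r)"
    by (simp add: mult.assoc)
  ultimately show ?case by simp
qed

definition monomial_support :: "nat \<Rightarrow> (nat \<Rightarrow> nat) \<Rightarrow> nat set" where
  "monomial_support N \<alpha> = {i\<in>{1..N}. \<alpha> i \<noteq> 0}"

lemma monomial_of_bool:
  "monomial N \<alpha> (\<lambda>i. of_bool (x i)) = (\<Prod>i\<in>monomial_support N \<alpha>. of_bool (x i))"
proof -
  have "monomial N \<alpha> (\<lambda>i. of_bool (x i)) = (\<Prod>i=1..N. if \<alpha> i \<noteq> 0 then of_bool (x i) else 1)"
    unfolding monomial_def by (intro prod.cong) auto
  also have "\<dots> = (\<Prod>i\<in>monomial_support N \<alpha>. of_bool (x i))"
    unfolding monomial_support_def by (rule prod.inter_filter[symmetric]) simp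
  finally show ?thesis .
qed

lemma card_monomial_support_le: "card (monomial_support N \<alpha>) \<le> (\<Sum>i=1..N. \<alpha> i)"
proof -
  have "card (monomial_support N \<alpha>) = (\<Sum>i\<in>monomial_support N \<alpha>. 1)"
    by simp
  also have "\<dots> \<le> (\<Sum>i\<in>monomial_support N \<alpha>. \<alpha> i)"
    by (intro sum_mono) (auto simp: monomial_support_def)
  also have "\<dots> \<le> (\<Sum>i=1..N. \<alpha> i)"
    by (intro sum_mono2) (auto simp: monomial_support_def)
  finally show ?thesis .
qed

text \<open>At 0/1 points \<open>y\<^sub>i\<^sup>k = y\<^sub>i\<close> for \<open>k > 0\<close>, so every monomial collapses to the multilinear monomial of
  its support, whose size is at most the degree.\<close>
lemma ml_eval_of_poly_deg_le:
  assumes "poly_deg_le N d p"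
  obtains c where "\<And>x. p (\<lambda>i. of_bool (x i)) = ml_eval N c x"
    and "\<And>T. c T \<noteq> 0 \<Longrightarrow> card T \<le> d"
proof -
  obtain A a where A: "finite A" "\<forall>\<alpha>\<in>A. (\<Sum>i=1..N. \<alpha> i) \<le> d"
    "\<forall>y. p y = (\<Sum>\<alpha>\<in>A. a \<alpha> * monomial N \<alpha> y)"
    using assms unfolding poly_deg_le_iff_monomial by blast
  let ?supp = "monomial_support N"
  define c where "c T = (\<Sum>\<alpha>\<in>{\<alpha>\<in>A. ?supp \<alpha> = T}. a \<alpha>)" for T
  let ?mono = "\<lambda>T x. \<Prod>i\<in>T. (of_bool (x i) :: real)"
  have c_eq_0: "c T = 0" if "T \<notin> ?supp ` A" for T
  proof -
    have "{\<alpha>\<in>A. ?supp \<alpha> = T} = {}"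
      using that by blast
    then show ?thesis
      unfolding c_def by (simp only: sum.empty)
  qed
  have eval: "p (\<lambda>i. of_bool (x i)) = ml_eval N c x" for x
  proof -
    have "p (\<lambda>i. of_bool (x i)) = (\<Sum>\<alpha>\<in>A. a \<alpha> * ?mono (?supp \<alpha>) x)"
      using A(3) by (simp add: monomial_of_bool)
    also have "\<dots> = (\<Sum>T\<in>?supp ` A. \<Sum>\<alpha>\<in>{\<alpha>\<in>A. ?supp \<alpha> = T}. a \<alpha> * ?mono (?supp \<alpha>) x)"
      by (rule sum.image_gen[OF A(1)])
    also have "\<dots> = (\<Sum>T\<in>?supp ` A. c T * ?mono T x)"
      unfolding c_def sum_distrib_right by (intro sum.cong) auto
    also have "\<dots> = (\<Sum>T\<in>Pow {1..N}. c T * ?mono T x)"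
      by (rule sum.mono_neutral_left) (auto simp: monomial_support_def c_eq_0)
    finally show ?thesis
      unfolding ml_eval_def .
  qed
  have deg: "card T \<le> d" if "c T \<noteq> 0" for T
  proof -
    from that c_eq_0 have "T \<in> ?supp ` A"
      by metis
    then obtain \<alpha> where "\<alpha> \<in> A" "T = ?supp \<alpha>"
      by (rule imageE)
    with A(2) card_monomial_support_le[of N \<alpha>] show ?thesis
      by auto
  qed
  show ?thesis
    by (rule that[OF eval deg])
qed

lemma ml_eval_eq_0_imp_coeff_eq_0:
  assumes "\<And>x. x \<in> cube N \<Longrightarrow> ml_eval N c x = 0" and "T \<subseteq> {1..N}"
  shows "c T = 0"
  using assms(2)
proof (induction "card T" arbitrary: T rule: less_induct)
  case less
  have "finite T"
    using less.prems finite_subset by blast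
  have "(\<lambda>i. i \<in> T) \<in> cube N"
    using less.prems unfolding cube_def by auto
  then have "0 = ml_eval N c (\<lambda>i. i \<in> T)"
    using assms(1) by simp
  also have "\<dots> = (\<Sum>T'\<in>Pow {1..N}. c T' * of_bool (T' \<subseteq> T))"
    unfolding ml_eval_def
  proof (intro sum.cong refl)
    fix T' assume "T' \<in> Pow {1..N}"
    then have "finite T'"
      by (auto dest: finite_subset)
    then show "c T' * (\<Prod>i\<in>T'. of_bool (i \<in> T)) = c T' * of_bool (T' \<subseteq> T)"
      by (simp add: prod_of_bool subset_eq)
  qed
  also have "\<dots> = (\<Sum>T'\<in>Pow T. c T')"
    using less.prems by (intro sum.mono_neutral_cong_right) auto
  also have "\<dots> = c T + (\<Sum>T'\<in>Pow T - {T}. c T')"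
    using \<open>finite T\<close> by (simp add: sum.remove[of "Pow T" T])
  also have "(\<Sum>T'\<in>Pow T - {T}. c T') = 0"
  proof (intro sum.neutral ballI)
    fix T' assume "T' \<in> Pow T - {T}"
    then have "T' \<subset> T" by auto
    with \<open>finite T\<close> less.prems show "c T' = 0"
      by (intro less.hyps psubset_card_mono) auto
  qed
  finally show ?case by simp
qed

definition ml_degree :: "nat \<Rightarrow> (nat set \<Rightarrow> real) \<Rightarrow> nat" where
  "ml_degree N c = Max (insert 0 {card T | T. T \<subseteq> {1..N} \<and> c T \<noteq> 0})"

lemma deg_bool_eq_ml_degree:
  assumes "\<forall>x\<in>cube N. of_bool (g x) = ml_eval N c x"
  shows "deg_bool N g = ml_degree N c"
  unfolding deg_bool_def ml_degree_def[symmetric]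
proof (rule the_equality)
  fix d assume "\<exists>c'. (\<forall>x\<in>cube N. of_bool (g x) = ml_eval N c' x) \<and> d = ml_degree N c'"
  then obtain c' where c': "\<forall>x\<in>cube N. of_bool (g x) = ml_eval N c' x" "d = ml_degree N c'"
    by blast
  have "ml_eval N (\<lambda>T. c' T - c T) x = 0" if "x \<in> cube N" for x
    using that assms c' by (simp add: ml_eval_def left_diff_distrib sum_subtractf)
  then have "c' T = c T" if "T \<subseteq> {1..N}" for T
    using ml_eval_eq_0_imp_coeff_eq_0[of N "\<lambda>T. c' T - c T" T] that by simp
  then show "d = ml_degree N c"
    unfolding c'(2) ml_degree_def by metis
qed (use assms in blast)

lemma ml_degree_le:
  assumes "\<And>T. T \<subseteq> {1..N} \<Longrightarrow> c T \<noteq> 0 \<Longrightarrow> card T \<le> d"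
  shows "ml_degree N c \<le> d"
  unfolding ml_degree_def
proof (rule Max.boundedI)
  have "{card T | T. T \<subseteq> {1..N} \<and> c T \<noteq> 0} \<subseteq> card ` Pow {1..N}"
    by auto
  then show "finite (insert 0 {card T | T. T \<subseteq> {1..N} \<and> c T \<noteq> 0})"
    by (simp add: finite_subset)
qed (use assms in auto)

lemma deg_bool_le:
  assumes "poly_deg_le N d p" and "\<forall>x\<in>cube N. p (\<lambda>i. of_bool (x i)) = of_bool (g x)"
  shows "deg_bool N g \<le> d"
proof -
  obtain c where eval: "\<And>x. p (\<lambda>i. of_bool (x i)) = ml_eval N c x"
    and deg: "\<And>T. c T \<noteq> 0 \<Longrightarrow> card T \<le> d"
    using ml_eval_of_poly_deg_le[OF assms(1)] by blast
  have "deg_bool N g = ml_degree N c"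
    using assms(2) by (intro deg_bool_eq_ml_degree) (simp add: eval)
  also have "\<dots> \<le> d"
    using deg by (intro ml_degree_le)
  finally show ?thesis .
qed

lemma ampc_answer_poly:
  assumes "ampc_computes N S R q w \<Delta> g"
  obtains p where "poly_deg_le N (S ^ (2 * R)) p"
    and "\<And>x. x \<in> cube N \<Longrightarrow>
      p (\<lambda>i. of_bool (x i)) = of_bool (dds_round N S q w x R Answer = {#Bit True#})"
proof -
  have "dds_deg_le N (S ^ (2 * R)) (\<lambda>x. dds_round N S q w x R)"
    using assms unfolding ampc_computes_def by (intro dds_deg_le_dds_round) auto
  then show ?thesis
    using that unfolding dds_deg_le_def cube_deg_le_def by metis
qed

theorem theorem3p2:
  fixes q :: "nat \<Rightarrow> 'm \<Rightarrow> ('k,'v) hist \<Rightarrow> 'k key option"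
    and w :: "nat \<Rightarrow> 'm \<Rightarrow> ('k,'v) hist \<Rightarrow> ('k key \<times> 'v val) list"
    and g :: "(nat \<Rightarrow> bool) \<Rightarrow> bool"
    and N S R :: nat and \<Delta> :: "(nat \<Rightarrow> bool) set"
  assumes "N \<ge> 1" and "S \<ge> 1" and "\<Delta> \<subseteq> cube N"
    and "ampc_computes N S R q w \<Delta> g"
  shows "(\<exists>p. poly_deg_le N (S ^ (2 * R)) p \<and>
             (\<forall>x\<in>\<Delta>. p (\<lambda>i. of_bool (x i)) = of_bool (g x)) \<and>
             (\<forall>x\<in>cube N - \<Delta>. p (\<lambda>i. of_bool (x i)) \<in> {0, 1})) \<and>
         (\<Delta> = cube N \<longrightarrow> deg_bool N g \<le> S ^ (2 * R))"
proof -
  obtain p where deg: "poly_deg_le N (S ^ (2 * R)) p"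
    and p: "\<And>x. x \<in> cube N \<Longrightarrow>
      p (\<lambda>i. of_bool (x i)) = of_bool (dds_round N S q w x R Answer = {#Bit True#})"
    using ampc_answer_poly[OF assms(4)] by blast
  have on_\<Delta>: "\<forall>x\<in>\<Delta>. p (\<lambda>i. of_bool (x i)) = of_bool (g x)"
    using assms(3,4) unfolding ampc_computes_def by (auto simp: p subset_iff)
  have zero_one: "\<forall>x\<in>cube N - \<Delta>. p (\<lambda>i. of_bool (x i)) \<in> {0, 1}"
    by (simp add: p)
  have deg_g: "\<Delta> = cube N \<longrightarrow> deg_bool N g \<le> S ^ (2 * R)"
    using deg_bool_le[OF deg] on_\<Delta> by simp
  show ?thesis
    by (intro conjI exI[of _ p]) (fact deg on_\<Delta> zero_one deg_g)+
qed

end
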